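(* Let $b_2\ge 2$, $p\ge1$, $1\le q<b_2$ be integers, $k=pb_2+q$, and let $M=k$. Over the $(b_2,M)$ burst erasure channel, the RD code (defined in the context) has delay profile $$(\underbrace{b_2,\dots,b_2}_{q},\underbrace{b_2+q,\dots,b_2+q}_{b_2},\underbrace{2b_2+q,\dots,2b_2+q}_{b_2},\dots,\underbrace{pb_2+q,\dots,pb_2+q}_{b_2}),$$ i.e. $s_j[t]$ is recoverable by time $t+b_2$ for $j\in[1,q]$ and by time $t+lb_2+q$ for $j\in[(l-1)b_2+q+1,lb_2+q]$, $l\in[p]$.
   Context: Convention: $m\bmod n$ denotes the representative of $m$ modulo $n$ in $\{1,\dots,n\}$. Point-to-point code: given $P'_0,\dots,P'_M\in\mathbb F^{k\times(n-k)}$ ($P'_i=0$ for $i\notin[0,M]$), messages $S[t]=(s_1[t],\dots,s_k[t])\in\mathbb F^k$ ($S[t]=0$ for $t<0$) are sent as $(S[t],P[t])$, $P[t]=\sum_{i=0}^M S[t-i]P'_i$; a $(b,M)$ burst channel erases packets so that in every window of $M+1$ consecutive slots the erased slots form at most one run of consecutive slots of length at most $b$. Delay profile $(d_1,\dots,d_k)$: for every admissible erasure pattern and all $t,i$, $s_i[t]$ is determined by the packets received at times $\le t+d_i$. RD code ($n-k=b_2$, in the paper $k=T-b_1$): $P'_i\in\mathbb F_2^{k\times b_2}$, $i\in[0,M]$: (I) for $i\in[b_2-1]$, a single $1$ at position $(i\bmod q,\,q+(i\bmod(b_2-q)))$, zeros elsewhere; (II) $P'_{b_2}(r,r)=1$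 for $r\in[q]$, zeros elsewhere; (III) for $j\in[p]$, $P'_{jb_2+q}$ has $I_{b_2}$ in rows $(j-1)b_2+q+1,\dots,jb_2+q$, zeros elsewhere; (IV) all other $P'_i=0$. *)

theory Defs
  imports Main "HOL-Library.Z2"
begin

text \<open>Modulo convention of the paper: representative of m modulo n in {1..n}.\<close>
definition pmod :: "nat \<Rightarrow> nat \<Rightarrow> nat" where
  "pmod m n = ((m + n - 1) mod n) + 1"

text \<open>A convolutional code is given by its matrices G i (i-th parity matrix P'_i),
  G i r c = entry at row r (1..k), column c (1..n-k). Messages: S t r (time t, row r).
  Times are naturals; S[t] = 0 for t < 0 is implicit (the sum stops at time 0).\<close>
definition parity :: "(nat \<Rightarrow> nat \<Rightarrow> nat \<Rightarrow> bit) \<Rightarrow> nat \<Rightarrow> nat \<Rightarrow> (nat \<Rightarrow> nat \<Rightarrow> bit) \<Rightarrow> nat \<Rightarrow> nat \<Rightarrow> bit" where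
  "parity G k M S t c = (\<Sum>i\<in>{0..min M t}. \<Sum>r\<in>{1..k}. S (t - i) r * G i r c)"

text \<open>(b,M) burst erasure channel: E is the set of erased time slots; in every window
  of M+1 consecutive slots the erased slots form one run of length at most b (possibly empty).\<close>
definition burst_admissible :: "nat \<Rightarrow> nat \<Rightarrow> nat set \<Rightarrow> bool" where
  "burst_admissible b M E \<longleftrightarrow> (\<forall>w. \<exists>a l. l \<le> b \<and> E \<inter> {w..w+M} = {a..<a+l})"

definition same_packet :: "(nat \<Rightarrow> nat \<Rightarrow> nat \<Rightarrow> bit) \<Rightarrow> nat \<Rightarrow> nat \<Rightarrow> nat \<Rightarrow>
    (nat \<Rightarrow> nat \<Rightarrow> bit) \<Rightarrow> (nat \<Rightarrow> nat \<Rightarrow> bit) \<Rightarrow> nat \<Rightarrow> bool" where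
  "same_packet G k nk M S S' \<tau> \<longleftrightarrow>
     (\<forall>r\<in>{1..k}. S \<tau> r = S' \<tau> r) \<and> (\<forall>c\<in>{1..nk}. parity G k M S \<tau> c = parity G k M S' \<tau> c)"

definition has_delay_profile :: "(nat \<Rightarrow> nat \<Rightarrow> nat \<Rightarrow> bit) \<Rightarrow> nat \<Rightarrow> nat \<Rightarrow> nat \<Rightarrow> nat \<Rightarrow> (nat \<Rightarrow> nat) \<Rightarrow> bool" where
  "has_delay_profile G k nk M b d \<longleftrightarrow>
     (\<forall>E. burst_admissible b M E \<longrightarrow>
       (\<forall>t j. j \<in> {1..k} \<longrightarrow>
         (\<forall>S S'. (\<forall>\<tau>\<le>t + d j. \<tau> \<notin> E \<longrightarrow> same_packet G k nk M S S' \<tau>) \<longrightarrow> S t j = S' t j)))"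

text \<open>The RD code with parameters b2, p, q (k = p*b2+q, M = k), matrices P'_i of size k x b2.\<close>
definition RD :: "nat \<Rightarrow> nat \<Rightarrow> nat \<Rightarrow> nat \<Rightarrow> nat \<Rightarrow> nat \<Rightarrow> bit" where
  "RD b2 p q i r c =
     (if 1 \<le> i \<and> i \<le> b2 - 1 then
        (if r = pmod i q \<and> c = q + pmod i (b2 - q) then 1 else 0)
      else if i = b2 then
        (if 1 \<le> r \<and> r \<le> q \<and> c = r then 1 else 0)
      else if (\<exists>j\<in>{1..p}. i = j * b2 + q) then
        (let j = (i - q) div b2 in
          if 1 \<le> c \<and> c \<le> b2 \<and> r = (j - 1) * b2 + q + c then 1 else 0)
      else 0)"

end

theory Submission
  imports Defs
begin

text \<open>
  Over GF(2) the code is linear, so it suffices to show that a message sequence D all of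
  whose received packets are zero vanishes in time. Let slot t be erased and let a be the
  start of its burst. Slots before a are already known to be zero: the received ones
  directly, the erased ones by induction, since they lie more than M slots back. Every slot
  from a + b2 up to t + M is received. The urgent rows 1..q of slot a + u are isolated by a
  single parity check: for u < q by the identity block P'_{b2} at time a + u + b2; for
  u \<ge> q by a cyclic entry of some P'_i with i < b2, whose other entries in that column
  meet received slots or slots a + u' with u' < q, recovered before. Row (m-1) b2 + q + c
  is isolated by column c of P'_{m b2 + q} at time t + m b2 + q; the other entries of that
  column meet urgent rows of slots \<ge> a + q, received slots, or slots before a.
\<close>

lemma bit_add_eq_0_iff: "(x::bit) + y = 0 \<longleftrightarrow> x = y"
  by (cases x; cases y) auto

subsection \<open>The cyclic representative\<close>

lemma pmod_eq_mod: "1 \<le> n \<Longrightarrow> pmod i n = (if i mod n = 0 then n else i mod n)"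
proof -
  assume n: "1 \<le> n"
  have shift: "(i + n - 1) mod n = (i mod n + (n - 1)) mod n"
    using n by (metis Nat.add_diff_assoc mod_add_left_eq)
  show ?thesis
  proof (cases "i mod n = 0")
    case False
    then have "i mod n + (n - 1) = (i mod n - 1) + n" using n by simp
    moreover have "((i mod n - 1) + n) mod n = i mod n - 1"
      using n by (simp add: less_imp_diff_less)
    ultimately show ?thesis using False shift unfolding pmod_def by simp
  qed (use shift n in \<open>simp add: pmod_def\<close>)
qed

lemma pmod_range: "1 \<le> n \<Longrightarrow> 1 \<le> pmod i n \<and> pmod i n \<le> n"
  by (simp add: pmod_eq_mod)

lemma pmod_cong_iff: "1 \<le> n \<Longrightarrow> pmod i n = pmod i' n \<longleftrightarrow> i mod n = i' mod n"
  by (simp add: pmod_eq_mod)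
    (metis mod_less_divisor less_irrefl le_eq_less_or_eq less_le_trans zero_less_one)

lemma pmod_self: "1 \<le> r \<Longrightarrow> r \<le> n \<Longrightarrow> pmod r n = r"
  by (cases "r = n") (auto simp: pmod_eq_mod)

lemma pmod_shift_onto:
  fixes q r s :: nat
  assumes "1 \<le> r" "r \<le> q"
  obtains y where "y < q" "pmod (s + y) q = r"
proof
  define y where "y = (r + q * s - s) mod q"
  have q: "1 \<le> q" using assms by simp
  show "y < q" unfolding y_def using q by simp
  have "s \<le> q * s" using q by simp
  then have le: "s \<le> r + q * s" by linarith
  have "(s + y) mod q = (s + (r + q * s - s)) mod q"
    unfolding y_def by (simp add: mod_add_right_eq)
  also have "\<dots> = (r + q * s) mod q"
    by (simp only: le_add_diff_inverse[OF le])
  also have "\<dots> = r mod q" by simp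
  finally show "pmod (s + y) q = r"
    using pmod_cong_iff[OF q, of "s + y" r] pmod_self[OF assms] by simp
qed

lemma mod_eq_less_imp_le_diff:
  fixes i j n :: nat
  assumes "i mod n = j mod n" "i < j"
  shows "n \<le> j - i"
proof -
  have "n dvd j - i" using assms mod_eq_dvd_iff_nat[of i j n] by simp
  then show ?thesis using assms(2) by (simp add: dvd_imp_le)
qed

subsection \<open>Parity checks and zero packets\<close>

lemma parity_add:
  "parity G k M (\<lambda>\<tau> r. S \<tau> r + S' \<tau> r) t c = parity G k M S t c + parity G k M S' t c"
  unfolding parity_def by (simp only: distrib_right sum.distrib)

lemma parity_eq_single_term:
  assumes "i0 \<le> M" "i0 \<le> \<tau>" "r0 \<in> {1..k}" "G i0 r0 c = 1"
    and others_zero: "\<And>i r. i \<le> M \<Longrightarrow> i \<le> \<tau> \<Longrightarrow> r \<in> {1..k} \<Longrightarrow> (i, r) \<noteq> (i0, r0) \<Longrightarrow>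
      G i r c \<noteq> 0 \<Longrightarrow> D (\<tau> - i) r = 0"
  shows "parity G k M D \<tau> c = D (\<tau> - i0) r0"
proof -
  let ?I = "{0..min M \<tau>} \<times> {1..k}" and ?f = "\<lambda>(i, r). D (\<tau> - i) r * G i r c"
  have i0: "(i0, r0) \<in> ?I" using assms(1-3) by simp
  have "parity G k M D \<tau> c = sum ?f ?I"
    unfolding parity_def sum.cartesian_product by simp
  also have "\<dots> = ?f (i0, r0) + sum ?f (?I - {(i0, r0)})"
    by (rule sum.remove) (use i0 in auto)
  also have "sum ?f (?I - {(i0, r0)}) = 0"
    by (rule sum.neutral) (use others_zero in \<open>fastforce\<close>)
  finally show ?thesis using assms(4) by simp
qed

definition zero_packet :: "(nat \<Rightarrow> nat \<Rightarrow> nat \<Rightarrow> bit) \<Rightarrow> nat \<Rightarrow> nat \<Rightarrow> nat \<Rightarrow>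
    (nat \<Rightarrow> nat \<Rightarrow> bit) \<Rightarrow> nat \<Rightarrow> bool" where
  "zero_packet G k nk M D \<tau> \<longleftrightarrow>
     (\<forall>r\<in>{1..k}. D \<tau> r = 0) \<and> (\<forall>c\<in>{1..nk}. parity G k M D \<tau> c = 0)"

lemma same_packet_iff_zero_packet:
  "same_packet G k nk M S S' \<tau> \<longleftrightarrow> zero_packet G k nk M (\<lambda>\<tau> r. S \<tau> r + S' \<tau> r) \<tau>"
  unfolding same_packet_def zero_packet_def parity_add bit_add_eq_0_iff ..

lemma has_delay_profileI_zero_packet:
  assumes "\<And>E D t j. burst_admissible b M E \<Longrightarrow> j \<in> {1..k} \<Longrightarrow>
      (\<And>\<tau>. \<tau> \<le> t + d j \<Longrightarrow> \<tau> \<notin> E \<Longrightarrow> zero_packet G k nk M D \<tau>) \<Longrightarrow> D t j = 0"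
  shows "has_delay_profile G k nk M b d"
  unfolding has_delay_profile_def
proof (intro allI impI)
  fix E t j S S'
  assume "burst_admissible b M E" "j \<in> {1..k}"
    and "\<forall>\<tau>\<le>t + d j. \<tau> \<notin> E \<longrightarrow> same_packet G k nk M S S' \<tau>"
  then have "S t j + S' t j = 0"
    by (intro assms[where D = "\<lambda>\<tau> r. S \<tau> r + S' \<tau> r"]) (auto simp: same_packet_iff_zero_packet)
  then show "S t j = S' t j" unfolding bit_add_eq_0_iff .
qed

subsection \<open>Bursts\<close>

lemma burst_admissible_interval:
  assumes "burst_admissible b M E" "t1 \<in> E" "t2 \<in> E" "t1 \<le> t2" "t2 \<le> t1 + M"
  shows "t2 < t1 + b" "{t1..t2} \<subseteq> E"
proof -
  obtain a l where l: "l \<le> b" "E \<inter> {t1..t1+M} = {a..<a+l}"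
    using assms(1) unfolding burst_admissible_def by blast
  have "t1 \<in> E \<inter> {t1..t1+M}" "t2 \<in> E \<inter> {t1..t1+M}"
    using assms(2-5) by auto
  then have "t1 \<in> {a..<a+l}" "t2 \<in> {a..<a+l}"
    unfolding l(2) by simp_all
  then show "t2 < t1 + b" using l(1) by simp
  have "{t1..t2} \<subseteq> {a..<a+l}"
    using \<open>t1 \<in> {a..<a+l}\<close> \<open>t2 \<in> {a..<a+l}\<close> by auto
  then show "{t1..t2} \<subseteq> E" using l(2) by blast
qed

lemma erased_run_start:
  fixes t :: nat
  assumes "t \<in> E"
  obtains a where "a \<le> t" "{a..t} \<subseteq> E" "0 < a \<Longrightarrow> a - 1 \<notin> E"
proof -
  define a where "a = (LEAST a. {a..t} \<subseteq> E)"
  have run: "{a..t} \<subseteq> E"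
    unfolding a_def by (rule LeastI[of _ t]) (use assms in auto)
  have "a \<le> t"
    unfolding a_def by (rule Least_le) (use assms in auto)
  moreover have "a - 1 \<notin> E" if "0 < a"
  proof
    assume "a - 1 \<in> E"
    with run have "{a - 1..t} \<subseteq> E"
      using atLeastAtMost_iff le_eq_less_or_eq by fastforce
    then have "a \<le> a - 1"
      unfolding a_def by (rule Least_le)
    with that show False by simp
  qed
  ultimately show ?thesis using that run by blast
qed

lemma burst_around_erasure:
  assumes adm: "burst_admissible b M E" and "b \<le> M" and "t \<in> E"
  obtains a where "a \<le> t" "t < a + b"
    "\<And>\<tau>. \<tau> \<in> E \<Longrightarrow> \<tau> < a \<Longrightarrow> \<tau> + M < a"
    "\<And>\<sigma>. a + b \<le> \<sigma> \<Longrightarrow> \<sigma> \<le> t + M \<Longrightarrow> \<sigma> \<notin> E"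
proof -
  obtain a where a: "a \<le> t" "{a..t} \<subseteq> E" "0 < a \<Longrightarrow> a - 1 \<notin> E"
    using erased_run_start[OF \<open>t \<in> E\<close>] by blast
  have aE: "a \<in> E" using a by auto
  have before: "\<tau> + M < a" if "\<tau> \<in> E" "\<tau> < a" for \<tau>
  proof (rule ccontr)
    assume "\<not> \<tau> + M < a"
    then have "{\<tau>..a} \<subseteq> E"
      using burst_admissible_interval(2)[OF adm that(1) aE] that(2) by simp
    then have "a - 1 \<in> E" using that(2) by auto
    with a(3) that(2) show False by simp
  qed
  have after: "\<sigma> \<notin> E" if "a + b \<le> \<sigma>" "\<sigma> \<le> t + M" for \<sigma>
  proof
    assume "\<sigma> \<in> E"
    have "a + b \<in> E"
    proof (cases "\<sigma> \<le> t")
      case True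
      with a(2) that show ?thesis by auto
    next
      case False
      then have "{t..\<sigma>} \<subseteq> E"
        using burst_admissible_interval(2)[OF adm \<open>t \<in> E\<close> \<open>\<sigma> \<in> E\<close>] that by simp
      with a(2) that show ?thesis by (cases "a + b \<le> t") auto
    qed
    then have "a + b < a + b"
      using burst_admissible_interval(1)[OF adm aE \<open>a + b \<in> E\<close>] \<open>b \<le> M\<close> by simp
    then show False by simp
  qed
  have "t < a + b"
  proof (rule ccontr)
    assume "\<not> t < a + b"
    then have "a + b \<in> E" "a + b \<le> t + M" using a(2) by auto
    with after show False by blast
  qed
  show thesis by (rule that[OF a(1) \<open>t < a + b\<close> before after])
qed

subsection \<open>The RD code\<close>

lemma RD_nonzero_cases:
  assumes "RD b2 p q i r c \<noteq> 0" "1 \<le> b2"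
  obtains (cyclic) "1 \<le> i" "i \<le> b2 - 1" "r = pmod i q" "c = q + pmod i (b2 - q)"
    | (diagonal) "i = b2" "1 \<le> r" "r \<le> q" "c = r"
    | (block) m where "1 \<le> m" "m \<le> p" "i = m * b2 + q" "r = (m - 1) * b2 + q + c"
proof -
  have "(i - q) div b2 = m" if "i = m * b2 + q" for m
    using that assms(2) by simp
  then show ?thesis
    using assms(1) that unfolding RD_def Let_def by (auto split: if_splits)
qed

lemma RD_cyclic_entry:
  "1 \<le> i \<Longrightarrow> i \<le> b2 - 1 \<Longrightarrow> RD b2 p q i (pmod i q) (q + pmod i (b2 - q)) = 1"
  unfolding RD_def by auto

lemma RD_diagonal_entry: "1 \<le> r \<Longrightarrow> r \<le> q \<Longrightarrow> 1 \<le> b2 \<Longrightarrow> RD b2 p q b2 r r = 1"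
  unfolding RD_def by auto

lemma RD_block_entry:
  assumes "1 \<le> m" "m \<le> p" "1 \<le> c" "c \<le> b2" "1 \<le> q"
  shows "RD b2 p q (m * b2 + q) ((m - 1) * b2 + q + c) c = 1"
proof -
  have "b2 \<le> m * b2" using assms(1) by simp
  then have "\<not> m * b2 + q \<le> b2 - 1" "m * b2 + q \<noteq> b2" using assms(5) by arith+
  moreover have "(m * b2 + q - q) div b2 = m" using assms(3,4) by simp
  ultimately show ?thesis using assms unfolding RD_def Let_def by auto
qed

lemma block_row_decomposition:
  fixes b2 p q j :: nat
  assumes "1 \<le> b2" "q < j" "j \<le> p * b2 + q"
  obtains m c where "1 \<le> m" "m \<le> p" "1 \<le> c" "c \<le> b2" "j = (m - 1) * b2 + q + c"
proof -
  define e where "e = j - q - 1"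
  have e: "e = e div b2 * b2 + e mod b2" by simp
  have "e < p * b2" using assms unfolding e_def by auto
  then have "e div b2 < p" using e by (metis less_mult_imp_div_less)
  moreover have "j = (e div b2 + 1 - 1) * b2 + q + (e mod b2 + 1)"
    using e assms(2) unfolding e_def by simp
  moreover have "e mod b2 < b2" using assms(1) by simp
  ultimately show ?thesis
    by (intro that[of "e div b2 + 1" "e mod b2 + 1"]) auto
qed

definition RD_delay :: "nat \<Rightarrow> nat \<Rightarrow> nat \<Rightarrow> nat" where
  "RD_delay b2 q j = (if j \<le> q then b2 else ((j - q + b2 - 1) div b2) * b2 + q)"

lemma RD_delay_block:
  assumes "1 \<le> m" "1 \<le> c" "c \<le> b2"
  shows "RD_delay b2 q ((m - 1) * b2 + q + c) = m * b2 + q"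
proof -
  obtain m' c' where m: "m = Suc m'" and c: "c = Suc c'"
    using assms(1,2) by (metis Suc_le_D One_nat_def)
  have "(m' * b2 + Suc c' + b2 - 1) div b2 = (c' + Suc m' * b2) div b2"
    by (simp add: algebra_simps)
  also have "\<dots> = Suc m' + c' div b2"
    by (rule div_mult_self1) (use assms(2,3) in simp)
  also have "\<dots> = Suc m'" using assms(3) c by simp
  finally show ?thesis unfolding RD_delay_def m c by simp
qed

lemma RD_delay_le:
  assumes "1 \<le> p" "1 \<le> b2" "j \<le> p * b2 + q"
  shows "RD_delay b2 q j \<le> p * b2 + q"
proof (cases "j \<le> q")
  case True
  then show ?thesis using assms(1) by (simp add: RD_delay_def trans_le_add1)
next
  case False
  then obtain m c where "1 \<le> m" "m \<le> p" "1 \<le> c" "c \<le> b2" "j = (m - 1) * b2 + q + c"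
    using block_row_decomposition assms(2,3) by (metis not_le)
  then show ?thesis using RD_delay_block[of m c b2 q] by simp
qed

subsection \<open>Recovery inside one burst\<close>

text \<open>
  D is the difference of two message sequences and [a, a + b2) the erasure burst containing t.
\<close>

locale RD_burst =
  fixes b2 p q :: nat and D :: "nat \<Rightarrow> nat \<Rightarrow> bit" and a t T :: nat
  assumes p_pos: "1 \<le> p" and q_pos: "1 \<le> q" and q_less: "q < b2"
    and zero_before: "\<And>\<tau> r. \<tau> < a \<Longrightarrow> r \<in> {1..p * b2 + q} \<Longrightarrow> D \<tau> r = 0"
    and zero_after: "\<And>\<sigma>. a + b2 \<le> \<sigma> \<Longrightarrow> \<sigma> \<le> t + (p * b2 + q) \<Longrightarrow> \<sigma> \<le> T \<Longrightarrow>
      zero_packet (RD b2 p q) (p * b2 + q) b2 (p * b2 + q) D \<sigma>"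
    and in_burst: "a \<le> t" "t < a + b2"
begin

lemma b2_pos: "1 \<le> b2"
  using q_pos q_less by simp

lemma b2_minus_q_pos: "1 \<le> b2 - q"
  using q_less by simp

lemma b2_le_p_b2: "b2 \<le> p * b2"
  using p_pos by simp

lemma
  assumes "a + b2 \<le> \<sigma>" "\<sigma> \<le> t + (p * b2 + q)" "\<sigma> \<le> T"
  shows message_zero_after: "r \<in> {1..p * b2 + q} \<Longrightarrow> D \<sigma> r = 0"
    and parity_zero_after: "c \<in> {1..b2} \<Longrightarrow> parity (RD b2 p q) (p * b2 + q) (p * b2 + q) D \<sigma> c = 0"
  using zero_after[OF assms] by (simp_all add: zero_packet_def)

lemma urgent_zero_early:
  assumes r: "1 \<le> r" "r \<le> q" and u: "u < q" and T: "a + u + b2 \<le> T"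
  shows "D (a + u) r = 0"
proof -
  let ?\<tau> = "a + u + b2"
  have window: "a + b2 \<le> ?\<tau>" "?\<tau> \<le> t + (p * b2 + q)" "?\<tau> \<le> T"
    using T u in_burst b2_le_p_b2 by linarith+
  have "parity (RD b2 p q) (p * b2 + q) (p * b2 + q) D ?\<tau> r = D (?\<tau> - b2) r"
  proof (rule parity_eq_single_term)
    show "b2 \<le> p * b2 + q" using b2_le_p_b2 by linarith
    show "b2 \<le> ?\<tau>" "r \<in> {1..p * b2 + q}" using b2_le_p_b2 r q_less by auto
    show "RD b2 p q b2 r r = 1" using RD_diagonal_entry r q_less by simp
  next
    fix i r' assume i: "i \<le> ?\<tau>" "r' \<in> {1..p * b2 + q}" "(i, r') \<noteq> (b2, r)"
      and nz: "RD b2 p q i r' r \<noteq> 0"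
    from nz b2_pos show "D (?\<tau> - i) r' = 0"
    proof (cases rule: RD_nonzero_cases)
      case cyclic
      then show ?thesis using pmod_range[OF b2_minus_q_pos, of i] r(2) by simp
    next
      case (block m)
      then have "b2 + q \<le> i" using mult_le_mono1[of 1 m b2] by simp
      then have "?\<tau> - i < a" using u i(1) by linarith
      then show ?thesis using zero_before i(2) by blast
    qed (use i(3) in auto)
  qed
  moreover have "parity (RD b2 p q) (p * b2 + q) (p * b2 + q) D ?\<tau> r = 0"
    using parity_zero_after[OF window] r q_less by simp
  ultimately show ?thesis by simp
qed

lemma late_check_others_zero:
  assumes u: "q \<le> u" "u < b2" and y: "y < q" and T: "a + b2 + q \<le> T + 1"
    and row: "pmod (b2 - u + y) q = r"
    and i: "i \<le> a + b2 + y" "r' \<in> {1..p * b2 + q}" "(i, r') \<noteq> (b2 - u + y, r)"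
    and nz: "RD b2 p q i r' (q + pmod (b2 - u + y) (b2 - q)) \<noteq> 0"
  shows "D (a + b2 + y - i) r' = 0"
proof -
  let ?i0 = "b2 - u + y"
  from nz b2_pos show ?thesis
  proof (cases rule: RD_nonzero_cases)
    case cyclic
    then have "i \<noteq> ?i0" using i(3) row by auto
    have same_class: "i mod (b2 - q) = ?i0 mod (b2 - q)"
      using cyclic pmod_cong_iff[OF b2_minus_q_pos] by simp
    have r': "1 \<le> r'" "r' \<le> q" using cyclic pmod_range[OF q_pos, of i] by auto
    consider "i < ?i0" | "?i0 < i" using \<open>i \<noteq> ?i0\<close> by linarith
    then show ?thesis
    proof cases
      case 1
      then have "b2 - q \<le> ?i0 - i" using same_class by (simp add: mod_eq_less_imp_le_diff)
      then have "a + b2 \<le> a + b2 + y - i" "a + b2 + y - i \<le> t + (p * b2 + q)"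
        "a + b2 + y - i \<le> T"
        using u T y in_burst b2_le_p_b2 by linarith+
      then show ?thesis using message_zero_after i(2) by blast
    next
      case 2
      \<comment> \<open>slot a + (b2 + y - i) is among the first q of the burst\<close>
      then have "b2 - q \<le> i - ?i0" using same_class by (simp add: mod_eq_less_imp_le_diff)
      then have "b2 + y - i < q" "a + b2 + y - i = a + (b2 + y - i)"
        using u cyclic by linarith+
      then show ?thesis using urgent_zero_early[OF r'] T by simp
    qed
  next
    case diagonal
    then show ?thesis using pmod_range[OF b2_minus_q_pos, of ?i0] by simp
  next
    case (block m)
    then have "b2 + q \<le> i" using mult_le_mono1[of 1 m b2] by simp
    then have "a + b2 + y - i < a" using y i(1) by linarith
    then show ?thesis using zero_before i(2) by blast
  qed
qed

lemma urgent_zero_late: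
  assumes r: "1 \<le> r" "r \<le> q" and u: "q \<le> u" "u < b2" and T: "a + b2 + q \<le> T + 1"
  shows "D (a + u) r = 0"
proof -
  obtain y where y: "y < q" and row: "pmod (b2 - u + y) q = r"
    using pmod_shift_onto[OF r] by blast
  let ?i0 = "b2 - u + y" and ?c = "q + pmod (b2 - u + y) (b2 - q)" and ?\<tau> = "a + b2 + y"
  have i0: "1 \<le> ?i0" "?i0 \<le> b2 - 1" using u y by auto
  have col: "?c \<in> {1..b2}" using pmod_range[OF b2_minus_q_pos, of ?i0] q_less by auto
  have window: "a + b2 \<le> ?\<tau>" "?\<tau> \<le> t + (p * b2 + q)" "?\<tau> \<le> T"
    using T y in_burst b2_le_p_b2 by linarith+
  have "parity (RD b2 p q) (p * b2 + q) (p * b2 + q) D ?\<tau> ?c = D (?\<tau> - ?i0) r"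
  proof (rule parity_eq_single_term)
    show "?i0 \<le> p * b2 + q" using i0 b2_le_p_b2 by linarith
    show "?i0 \<le> ?\<tau>" "r \<in> {1..p * b2 + q}" using u r by auto
    show "RD b2 p q ?i0 r ?c = 1" using RD_cyclic_entry[OF i0, of p q] row by simp
  qed (use late_check_others_zero[OF u y T row] in blast)
  moreover have "parity (RD b2 p q) (p * b2 + q) (p * b2 + q) D ?\<tau> ?c = 0"
    using parity_zero_after[OF window] col by simp
  moreover have "?\<tau> - ?i0 = a + u" using u by simp
  ultimately show ?thesis by simp
qed

lemma urgent_zero:
  assumes "a + q \<le> \<sigma>" "\<sigma> \<le> t + (p * b2 + q)" "\<sigma> \<le> T" "a + b2 + q \<le> T + 1"
    and "1 \<le> r" "r \<le> q"
  shows "D \<sigma> r = 0"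
proof (cases "a + b2 \<le> \<sigma>")
  case True
  then show ?thesis using message_zero_after assms by simp
next
  case False
  then have "D (a + (\<sigma> - a)) r = 0"
    by (intro urgent_zero_late) (use assms in auto)
  then show ?thesis using assms(1) by simp
qed

lemma urgent_row_zero:
  assumes "1 \<le> j" "j \<le> q" "t + b2 \<le> T"
  shows "D t j = 0"
proof -
  have "D (a + (t - a)) j = 0"
  proof (cases "t - a < q")
    case True
    then show ?thesis by (intro urgent_zero_early) (use assms in_burst in auto)
  next
    case False
    then show ?thesis by (intro urgent_zero_late) (use assms in_burst in auto)
  qed
  then show ?thesis using in_burst by simp
qed

lemma block_check_others_zero:
  assumes m: "1 \<le> m" "m \<le> p" and T: "t + m * b2 + q \<le> T"
    and i: "i \<le> t + m * b2 + q" "r' \<in> {1..p * b2 + q}"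
      "(i, r') \<noteq> (m * b2 + q, (m - 1) * b2 + q + c)"
    and nz: "RD b2 p q i r' c \<noteq> 0"
  shows "D (t + m * b2 + q - i) r' = 0"
proof -
  let ?\<tau> = "t + m * b2 + q"
  have mb: "b2 \<le> m * b2" "m * b2 \<le> p * b2" using m by simp_all
  have urgent_window: "?\<tau> - i \<le> t + (p * b2 + q)" "?\<tau> - i \<le> T" "a + b2 + q \<le> T + 1"
    using T in_burst mb by linarith+
  from nz b2_pos show ?thesis
  proof (cases rule: RD_nonzero_cases)
    case cyclic
    then have "a + q \<le> ?\<tau> - i" using in_burst mb by linarith
    then show ?thesis
      using urgent_zero urgent_window cyclic(3) pmod_range[OF q_pos, of i] by simp
  next
    case diagonal
    then have "a + q \<le> ?\<tau> - i" using in_burst mb by linarith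
    then show ?thesis using urgent_zero urgent_window diagonal by simp
  next
    case (block m')
    then have "m' \<noteq> m" using i(3) by auto
    then consider "m' < m" | "m < m'" by linarith
    then show ?thesis
    proof cases
      case 1
      then have "m' * b2 + b2 \<le> m * b2" using mult_le_mono1[of "Suc m'" m b2] by simp
      then have "a + b2 \<le> ?\<tau> - i" using block(3) in_burst by linarith
      then show ?thesis using message_zero_after urgent_window i(2) by blast
    next
      case 2
      then have "m * b2 + b2 \<le> m' * b2" using mult_le_mono1[of "Suc m" m' b2] by simp
      then have "?\<tau> - i < a" using block(3) in_burst i(1) by linarith
      then show ?thesis using zero_before i(2) by blast
    qed
  qed
qed

lemma block_row_zero:
  assumes m: "1 \<le> m" "m \<le> p" and c: "1 \<le> c" "c \<le> b2" and T: "t + m * b2 + q \<le> T"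
  shows "D t ((m - 1) * b2 + q + c) = 0"
proof -
  let ?\<tau> = "t + m * b2 + q"
  have mb: "b2 \<le> m * b2" "m * b2 \<le> p * b2" using m by simp_all
  have window: "a + b2 \<le> ?\<tau>" "?\<tau> \<le> t + (p * b2 + q)" "?\<tau> \<le> T"
    using T in_burst mb by linarith+
  have "parity (RD b2 p q) (p * b2 + q) (p * b2 + q) D ?\<tau> c
      = D (?\<tau> - (m * b2 + q)) ((m - 1) * b2 + q + c)"
  proof (rule parity_eq_single_term)
    show "m * b2 + q \<le> p * b2 + q" "m * b2 + q \<le> ?\<tau>" using mb by simp_all
    have "(m - 1) * b2 + b2 = m * b2" using m(1) by (cases m) auto
    then have "(m - 1) * b2 + c \<le> p * b2" using c mb by linarith
    then show "(m - 1) * b2 + q + c \<in> {1..p * b2 + q}" using c by simp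
    show "RD b2 p q (m * b2 + q) ((m - 1) * b2 + q + c) c = 1"
      using RD_block_entry m c q_pos by blast
  qed (use block_check_others_zero[OF m T] in blast)
  moreover have "parity (RD b2 p q) (p * b2 + q) (p * b2 + q) D ?\<tau> c = 0"
    using parity_zero_after[OF window] c by simp
  ultimately show ?thesis by simp
qed

lemma row_zero:
  assumes j: "j \<in> {1..p * b2 + q}" and T: "t + RD_delay b2 q j \<le> T"
  shows "D t j = 0"
proof (cases "j \<le> q")
  case True
  with assms show ?thesis by (intro urgent_row_zero) (auto simp: RD_delay_def)
next
  case False
  then obtain m c where mc: "1 \<le> m" "m \<le> p" "1 \<le> c" "c \<le> b2"
    and j_eq: "j = (m - 1) * b2 + q + c"
    using block_row_decomposition[OF b2_pos] j by (metis atLeastAtMost_iff not_le)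
  have "t + m * b2 + q \<le> T" using T RD_delay_block[OF mc(1,3,4)] j_eq by simp
  then show ?thesis unfolding j_eq by (rule block_row_zero[OF mc])
qed

end

lemma RD_zero_packets_force_zero:
  fixes D :: "nat \<Rightarrow> nat \<Rightarrow> bit"
  assumes p: "1 \<le> p" and q: "1 \<le> q" "q < b2"
    and adm: "burst_admissible b2 (p * b2 + q) E"
    and zero: "\<And>\<tau>. \<tau> \<le> T \<Longrightarrow> \<tau> \<notin> E \<Longrightarrow> zero_packet (RD b2 p q) (p * b2 + q) b2 (p * b2 + q) D \<tau>"
  shows "j \<in> {1..p * b2 + q} \<Longrightarrow> t + RD_delay b2 q j \<le> T \<Longrightarrow> D t j = 0"
proof (induction t arbitrary: j rule: less_induct)
  case (less t)
  show ?case
  proof (cases "t \<in> E")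
    case False
    with zero[of t] less.prems show ?thesis by (auto simp: zero_packet_def)
  next
    case True
    have "b2 \<le> p * b2 + q" using p by (simp add: trans_le_add1)
    then obtain a where a: "a \<le> t" "t < a + b2"
      and before: "\<And>\<tau>. \<tau> \<in> E \<Longrightarrow> \<tau> < a \<Longrightarrow> \<tau> + (p * b2 + q) < a"
      and after: "\<And>\<sigma>. a + b2 \<le> \<sigma> \<Longrightarrow> \<sigma> \<le> t + (p * b2 + q) \<Longrightarrow> \<sigma> \<notin> E"
      using burst_around_erasure[OF adm _ True] by blast
    have "D \<tau> r = 0" if "\<tau> < a" "r \<in> {1..p * b2 + q}" for \<tau> r
    proof (cases "\<tau> \<in> E")
      case False
      then show ?thesis using zero[of \<tau>] that a(1) less.prems(2) by (auto simp: zero_packet_def)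
    next
      case True
      have "RD_delay b2 q r \<le> p * b2 + q" using RD_delay_le p q that(2) by simp
      then have "\<tau> + RD_delay b2 q r \<le> T"
        using before[OF True that(1)] a(1) less.prems(2) by linarith
      then show ?thesis using less.IH[of \<tau> r] that a(1) by simp
    qed
    then interpret RD_burst b2 p q D a t T
      using p q a after zero by unfold_locales auto
    show ?thesis using row_zero less.prems by blast
  qed
qed

lemma RD_has_delay_profile:
  assumes "1 \<le> p" "1 \<le> q" "q < b2"
  shows "has_delay_profile (RD b2 p q) (p * b2 + q) b2 (p * b2 + q) b2 (RD_delay b2 q)"
proof (rule has_delay_profileI_zero_packet)
  fix E D t j
  assume "burst_admissible b2 (p * b2 + q) E" "j \<in> {1..p * b2 + q}"
    and "\<And>\<tau>. \<tau> \<le> t + RD_delay b2 q j \<Longrightarrow> \<tau> \<notin> E \<Longrightarrow>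
      zero_packet (RD b2 p q) (p * b2 + q) b2 (p * b2 + q) D \<tau>"
  then show "D t j = 0" using RD_zero_packets_force_zero[OF assms] by blast
qed

\<comment> \<open>The hypothesis 2 \<le> b2 is implied by 1 \<le> q < b2.\<close>
theorem mainTheorem8:
  fixes b2 p q :: nat
  assumes "b2 \<ge> 2" and "p \<ge> 1" and "1 \<le> q" and "q < b2"
  shows "has_delay_profile (RD b2 p q) (p * b2 + q) b2 (p * b2 + q) b2
           (\<lambda>j. if j \<le> q then b2 else ((j - q + b2 - 1) div b2) * b2 + q)"
  using RD_has_delay_profile[OF assms(2-4)] unfolding RD_delay_def .

end
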